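(* Let $(X_k)_{k=1}^K$ be identically distributed random variables with a continuous CDF $F_X$ and tail quantile function $\bar q_X$, forming an $m$-dependent sequence ($m$ fixed). Let $(M_K)$ be positive integers with $M_K/K\to0$ and $M_K\ge(m+1)(e+\varepsilon)\ln K$ for some $\varepsilon>0$. Define $\mathcal M_K=\{k:\,X_k\ge X_{(K-M_K+1)}\}$ and let $\mathcal E\subseteq\{1,\dots,K\}$ with $E=|\mathcal E|$. Then there is $K_0$ such that for all $K>K_0$: \[ \Pr\Big(X_{(K-M_K+1)}>\bar q_X\big(\tfrac{M_K}{e(K+m+1)}\big)\Big)\le\frac{m+1}{K^{1+\varepsilon/3}} \] and \[ \Pr(\mathcal M_K\cap\mathcal E=\emptyset)\le(m+1)\exp\!\Big(-\frac{M_K}{e(m+1)}\cdot\frac{1-\frac{m+1}{K}}{1+\frac{m+1}{K}}\Big)+\Big(1-\frac{M_K}{e(K+m+1)}\Big)^{E/(m+1)}. \]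
   Context: $X_{(j)}$ denotes the $j$-th smallest of $X_1,\dots,X_K$. A sequence $(X_k)$ is $m$-dependent if for every $s$ the families $(X_k)_{k\le s}$ and $(X_k)_{k>s+m}$ are independent. Tail quantile function: $\bar q_X(p)=\min\{x:\,F_X(x)\ge1-p\}$. *)

theory Defs
  imports "HOL-Probability.Probability"
begin

definition ord_stat :: "(nat \<Rightarrow> real) \<Rightarrow> nat \<Rightarrow> nat \<Rightarrow> real" where
  "ord_stat x K j = sort (map x [1..<Suc K]) ! (j - 1)"

definition tail_quantile :: "(real \<Rightarrow> real) \<Rightarrow> real \<Rightarrow> real" where
  "tail_quantile F p = (LEAST x. F x \<ge> 1 - p)"

definition (in prob_space) m_dependent :: "nat \<Rightarrow> nat \<Rightarrow> (nat \<Rightarrow> 'a \<Rightarrow> real) \<Rightarrow> bool" where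
  "m_dependent m K X \<longleftrightarrow> (\<forall>s.
     indep_var (PiM {1..s} (\<lambda>_. borel)) (\<lambda>\<omega>. restrict (\<lambda>k. X k \<omega>) {1..s})
               (PiM {s+m+1..K} (\<lambda>_. borel)) (\<lambda>\<omega>. restrict (\<lambda>k. X k \<omega>) {s+m+1..K}))"

end

theory Submission
  imports Defs
begin

(*
  Let p = M_K / (e (K + m + 1)) and let q be the tail quantile of F at level p; since F is
  continuous, P(X_k > q) = p exactly. The order statistic X_(K-M_K+1) exceeds q only if at
  least M_K of the X_k exceed q. Within one residue class modulo m + 1 the indices are more
  than m apart, so by m-dependence the X_k of a class are independent, and the Chernoff
  argument E exp(#exceedances) <= (1 + (e - 1) p)^|class| applies. Some class must carry at
  least M_K / (m + 1) exceedances, and a union bound over the m + 1 classes gives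
  (m + 1) exp(-M_K / (e (m + 1))), which the growth condition on M_K turns into
  (m + 1) / K^(1 + eps/3).

  If no index of E is among the top M_K, then either the order statistic exceeds q, or every
  X_k with k in the largest residue class of E (at least |E| / (m + 1) indices) is below q;
  the latter has probability at most (1 - p)^(|E| / (m + 1)) by independence within the
  class. The factor (1 - (m+1)/K) / (1 + (m+1)/K) in the statement is at most 1 and is
  simply dropped.
*)

lemma tail_quantile_continuous:
  fixes F :: "real \<Rightarrow> real"
  assumes mono: "mono F" and top: "(F \<longlongrightarrow> 1) at_top" and bot: "(F \<longlongrightarrow> 0) at_bot"
    and cont: "continuous_on UNIV F" and p: "0 < p" "p < 1"
  shows "F (tail_quantile F p) = 1 - p"
proof -
  define S where "S = {x. 1 - p \<le> F x}"
  have "eventually (\<lambda>x. F x > 1 - p) at_top"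
    using order_tendstoD(1)[OF top, of "1 - p"] p by simp
  then obtain b where "F b > 1 - p" by (auto simp: eventually_at_top_linorder)
  then have "S \<noteq> {}" by (auto simp: S_def intro!: less_imp_le)
  have "eventually (\<lambda>x. F x < 1 - p) at_bot"
    using order_tendstoD(2)[OF bot, of "1 - p"] p by simp
  then obtain a where a: "F a < 1 - p" by (auto simp: eventually_at_bot_linorder)
  have a_below: "a \<le> x" if "x \<in> S" for x
  proof (rule ccontr)
    assume "\<not> a \<le> x"
    then have "F x \<le> F a" using mono by (simp add: monoD)
    then show False using that a by (simp add: S_def)
  qed
  then have "bdd_below S" by (rule bdd_belowI)
  moreover have "closed S"
    unfolding S_def by (intro closed_Collect_le continuous_intros cont)
  ultimately have "Inf S \<in> S" using \<open>S \<noteq> {}\<close> by (intro closed_contains_Inf)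
  have "tail_quantile F p = Inf S"
    unfolding tail_quantile_def
  proof (rule Least_equality)
    show "1 - p \<le> F (Inf S)" using \<open>Inf S \<in> S\<close> by (simp add: S_def)
    show "Inf S \<le> y" if "1 - p \<le> F y" for y
      using that \<open>bdd_below S\<close> by (intro cInf_lower) (simp_all add: S_def)
  qed
  moreover obtain c where "a \<le> c" "c \<le> Inf S" "F c = 1 - p"
  proof -
    have "F a \<le> 1 - p" "1 - p \<le> F (Inf S)" "a \<le> Inf S"
      using a \<open>Inf S \<in> S\<close> a_below by (simp_all add: S_def)
    then show ?thesis
      using IVT'[of F a "1 - p" "Inf S"] continuous_on_subset[OF cont] that by blast
  qed
  moreover have "Inf S \<le> c"
    using \<open>F c = 1 - p\<close> \<open>bdd_below S\<close> by (intro cInf_lower) (simp_all add: S_def)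
  ultimately show ?thesis by simp
qed

lemma (in prob_space) prob_tail_quantile:
  fixes Y :: "'a \<Rightarrow> real"
  assumes [measurable]: "Y \<in> borel_measurable M"
    and cdf: "\<And>x. prob {\<omega> \<in> space M. Y \<omega> \<le> x} = F x"
    and cont: "continuous_on UNIV F" and p: "0 < p" "p < 1"
  shows "prob {\<omega> \<in> space M. Y \<omega> > tail_quantile F p} = p"
    and "prob {\<omega> \<in> space M. Y \<omega> < tail_quantile F p} \<le> 1 - p"
proof -
  interpret Y: real_distribution "distr M borel Y" by simp
  have "Y -` {..x} \<inter> space M = {\<omega> \<in> space M. Y \<omega> \<le> x}" for x
    by auto
  then have F_cdf: "F = cdf (distr M borel Y)"
    by (simp add: fun_eq_iff cdf_def2 measure_distr cdf)
  define q where "q = tail_quantile F p"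
  have Fq: "F q = 1 - p"
    unfolding q_def F_cdf
    using cont p Y.cdf_lim_at_top_prob Y.cdf_lim_at_bot Y.cdf_nondecreasing
    by (intro tail_quantile_continuous) (auto intro: monoI simp: F_cdf)
  have "{\<omega> \<in> space M. Y \<omega> > q} = space M - {\<omega> \<in> space M. Y \<omega> \<le> q}" by auto
  then show "prob {\<omega> \<in> space M. Y \<omega> > tail_quantile F p} = p"
    by (simp add: prob_compl cdf Fq flip: q_def)
  have "prob {\<omega> \<in> space M. Y \<omega> < q} \<le> prob {\<omega> \<in> space M. Y \<omega> \<le> q}"
    by (intro finite_measure_mono) auto
  then show "prob {\<omega> \<in> space M. Y \<omega> < tail_quantile F p} \<le> 1 - p"
    by (simp add: cdf Fq flip: q_def)
qed

lemma ord_stat_gt_imp_card_ge: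
  fixes x :: "nat \<Rightarrow> real"
  assumes "j \<le> K" and "ord_stat x K (K - j + 1) > q"
  shows "j \<le> card {k \<in> {1..K}. x k > q}"
proof -
  define xs where "xs = sort (map x [1..<Suc K])"
  have "length xs = K" "sorted xs" by (simp_all add: xs_def)
  have "xs ! (K - j) > q"
    using assms by (simp add: ord_stat_def xs_def)
  then have "q < xs ! (K - j + i)" if "K - j + i < K" for i
    using sorted_nth_mono[OF \<open>sorted xs\<close>, of "K - j" "K - j + i"] that \<open>length xs = K\<close> by simp
  then have "\<forall>y\<in>set (drop (K - j) xs). y > q"
    using \<open>length xs = K\<close> by (auto simp: in_set_conv_nth)
  then have "j \<le> length (filter (\<lambda>y. y > q) (drop (K - j) xs))"
    using \<open>length xs = K\<close> assms(1) by simp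
  also have "\<dots> \<le> length (filter (\<lambda>y. y > q) (take (K - j) xs @ drop (K - j) xs))"
    by (simp only: filter_append length_append le_add2)
  also have "\<dots> = length (filter (\<lambda>y. y > q) xs)"
    by simp
  also have "\<dots> = length (filter (\<lambda>k. x k > q) [1..<Suc K])"
    by (simp add: xs_def filter_sort filter_map comp_def)
  also have "\<dots> = card {k \<in> {1..K}. x k > q}"
    by (subst distinct_length_filter) (auto intro!: arg_cong[where f=card])
  finally show ?thesis .
qed

lemma mod_eq_less_imp_add_le:
  fixes j k d :: nat
  assumes "j mod d = k mod d" "j < k"
  shows "j + d \<le> k"
proof -
  have "d dvd k - j" using mod_eq_dvd_iff_nat[of j k d] assms by simp
  then have "d \<le> k - j" using assms(2) by (intro dvd_imp_le) simp_all
  then show ?thesis using assms(2) by simp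
qed

lemma card_residue_class_le: "card {k \<in> {1..K}. k mod d = r} * d \<le> K + (d::nat)"
proof (cases "d = 0")
  case False
  have "inj_on (\<lambda>k. k div d) {k \<in> {1..K}. k mod d = r}"
    by (rule inj_onI) (metis (mono_tags, lifting) div_mod_decomp mem_Collect_eq)
  moreover have "(\<lambda>k. k div d) ` {k \<in> {1..K}. k mod d = r} \<subseteq> {0..K div d}"
    by (auto intro: div_le_mono)
  ultimately have "card {k \<in> {1..K}. k mod d = r} \<le> K div d + 1"
    using card_inj_on_le[of _ _ "{0..K div d}"] by fastforce
  then have "card {k \<in> {1..K}. k mod d = r} * d \<le> (K div d + 1) * d"
    by (rule mult_right_mono) simp
  also have "\<dots> \<le> K + d" by simp
  finally show ?thesis .
qed simp

lemma ex_residue_class_card_ge: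
  fixes A :: "nat set" and d :: nat
  assumes "finite A" "0 < d"
  shows "\<exists>r<d. card A / d \<le> card {k \<in> A. k mod d = r}"
proof (rule ccontr)
  assume "\<not> ?thesis"
  then have less: "card {k \<in> A. k mod d = r} < card A / d" if "r < d" for r
    using that by auto
  have img: "(\<lambda>k. k mod d) ` A \<subseteq> {..<d}" using assms(2) by auto
  have "card A = (\<Sum>r<d. card {k \<in> A. k mod d = r})"
    using sum.group[OF assms(1) finite_lessThan img, where h = "\<lambda>_. 1::nat"] by simp
  then have "real (card A) = (\<Sum>r<d. real (card {k \<in> A. k mod d = r}))"
    by (simp flip: of_nat_sum)
  also have "\<dots> < (\<Sum>r<d. card A / d)"
    using assms(2) less by (intro sum_strict_mono) auto
  also have "\<dots> = card A" using assms(2) by simp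
  finally show False by simp
qed

lemma tail_fraction_bounds:
  fixes j K m :: nat
  assumes "1 \<le> j" "j \<le> K"
  shows "0 < j / (exp 1 * (K + m + 1))" and "j / (exp 1 * (K + m + 1)) < 1"
proof -
  have "real j < K + m + 1" using assms by simp
  also have "\<dots> \<le> exp 1 * (K + m + 1)" using exp_ge_add_one_self[of 1] by simp
  finally show "j / (exp 1 * (K + m + 1)) < 1" by simp
qed (use assms in simp)

lemma exp_neg_le_inverse_powr:
  fixes x a d \<epsilon> :: real
  assumes "1 \<le> x" "0 < \<epsilon>" "0 < d" and a: "d * (exp 1 + \<epsilon>) * ln x \<le> a"
  shows "exp (- (a / (exp 1 * d))) \<le> 1 / x powr (1 + \<epsilon> / 3)"
proof -
  have "\<epsilon> / 3 \<le> \<epsilon> / exp 1"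
    using assms exp_le by (intro divide_left_mono) auto
  then have "(1 + \<epsilon> / 3) * ln x \<le> (exp 1 + \<epsilon>) / exp 1 * ln x"
    using assms(1) by (intro mult_right_mono) (simp_all add: add_divide_distrib)
  also have "\<dots> = d * (exp 1 + \<epsilon>) * ln x / (exp 1 * d)"
    using assms(3) by simp
  also have "\<dots> \<le> a / (exp 1 * d)"
    using a assms(3) by (intro divide_right_mono) simp_all
  finally have "exp (- (a / (exp 1 * d))) \<le> exp (- ((1 + \<epsilon> / 3) * ln x))"
    by simp
  also have "\<dots> = 1 / x powr (1 + \<epsilon> / 3)"
    using assms(1) by (simp add: powr_def exp_minus inverse_eq_divide)
  finally show ?thesis .
qed

lemma sum_Pow_power_card:
  fixes c :: "'a :: comm_semiring_1"
  assumes "finite A"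
  shows "(\<Sum>T\<in>Pow A. c ^ card T) = (1 + c) ^ card A"
  using prod_add[OF assms, of "\<lambda>_. c" "\<lambda>_. 1"] by (simp add: add.commute)

locale m_dependent_family = prob_space +
  fixes m K :: nat and X :: "nat \<Rightarrow> 'a \<Rightarrow> real"
  assumes X_measurable [measurable]: "\<And>k. X k \<in> borel_measurable M"
    and m_dependent: "m_dependent m K X"
begin

lemma prob_Ball_Int_eq_mult:
  assumes T: "T \<subseteq> {1..s}" and k: "k \<in> {s+m+1..K}"
    and U: "\<And>j. j \<in> T \<Longrightarrow> U j \<in> sets borel" and V: "V \<in> sets borel"
  shows "prob {\<omega> \<in> space M. (\<forall>j\<in>T. X j \<omega> \<in> U j) \<and> X k \<omega> \<in> V}
       = prob {\<omega> \<in> space M. \<forall>j\<in>T. X j \<omega> \<in> U j} * prob {\<omega> \<in> space M. X k \<omega> \<in> V}"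
proof -
  let ?past = "\<lambda>\<omega>. restrict (\<lambda>j. X j \<omega>) {1..s}" and ?future = "\<lambda>\<omega>. restrict (\<lambda>j. X j \<omega>) {s+m+1..K}"
  define C where "C = {f \<in> space (PiM {1..s} (\<lambda>_. borel)). \<forall>j\<in>T. f j \<in> U j}"
  define D where "D = {g \<in> space (PiM {s+m+1..K} (\<lambda>_. borel :: real measure)). g k \<in> V}"
  have "indep_var (PiM {1..s} (\<lambda>_. borel)) ?past (PiM {s+m+1..K} (\<lambda>_. borel)) ?future"
    using m_dependent unfolding m_dependent_def by blast
  moreover have "C \<in> sets (PiM {1..s} (\<lambda>_. borel))"
    unfolding C_def using U finite_subset[OF T finite_atLeastAtMost] by measurable (use T in auto)
  moreover have "D \<in> sets (PiM {s+m+1..K} (\<lambda>_. borel))"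
    unfolding D_def using k V by measurable
  ultimately have "prob ((\<lambda>\<omega>. (?past \<omega>, ?future \<omega>)) -` (C \<times> D) \<inter> space M)
      = prob (?past -` C \<inter> space M) * prob (?future -` D \<inter> space M)"
    by (rule indep_varD)
  moreover have "?past \<omega> \<in> C \<longleftrightarrow> (\<forall>j\<in>T. X j \<omega> \<in> U j)" for \<omega>
    using T by (auto simp: C_def space_PiM subset_eq)
  moreover have "?future \<omega> \<in> D \<longleftrightarrow> X k \<omega> \<in> V" for \<omega>
    using k by (simp add: D_def space_PiM)
  ultimately show ?thesis
    by (simp add: vimage_def Int_def conj_commute)
qed

lemma prob_Ball_eq_prod:
  assumes "T \<subseteq> {1..K}" and "\<And>j k. j \<in> T \<Longrightarrow> k \<in> T \<Longrightarrow> j < k \<Longrightarrow> j + m < k"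
    and "\<And>j. j \<in> T \<Longrightarrow> U j \<in> sets borel"
  shows "prob {\<omega> \<in> space M. \<forall>j\<in>T. X j \<omega> \<in> U j} = (\<Prod>j\<in>T. prob {\<omega> \<in> space M. X j \<omega> \<in> U j})"
  using finite_subset[OF assms(1) finite_atLeastAtMost] assms
proof (induct T rule: finite_linorder_max_induct)
  case empty
  then show ?case by (simp add: prob_space)
next
  case (insert k T)
  show ?case
  proof (cases "T = {}")
    case True
    then show ?thesis by simp
  next
    case False
    then obtain j where "j \<in> T" by blast
    then have "j + m < k" using insert by simp
    define s where "s = k - (m + 1)"
    have "T \<subseteq> {1..s}"
    proof
      fix i assume "i \<in> T"
      then have "i + m < k" "1 \<le> i" using insert by auto
      then show "i \<in> {1..s}" by (simp add: s_def)
    qed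
    moreover have "k \<in> {s+m+1..K}"
      using insert \<open>j + m < k\<close> by (auto simp: s_def)
    ultimately have "prob {\<omega> \<in> space M. (\<forall>j\<in>T. X j \<omega> \<in> U j) \<and> X k \<omega> \<in> U k}
        = prob {\<omega> \<in> space M. \<forall>j\<in>T. X j \<omega> \<in> U j} * prob {\<omega> \<in> space M. X k \<omega> \<in> U k}"
      using insert.prems by (intro prob_Ball_Int_eq_mult) auto
    moreover have "{\<omega> \<in> space M. \<forall>j\<in>insert k T. X j \<omega> \<in> U j}
        = {\<omega> \<in> space M. (\<forall>j\<in>T. X j \<omega> \<in> U j) \<and> X k \<omega> \<in> U k}"
      by auto
    moreover have "k \<notin> T" using insert by auto
    ultimately show ?thesis
      using insert by (simp add: mult.commute)
  qed
qed

lemma integral_exp_card_le: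
  assumes S: "S \<subseteq> {1..K}" and gap: "\<And>j k. j \<in> S \<Longrightarrow> k \<in> S \<Longrightarrow> j < k \<Longrightarrow> j + m < k"
    and U: "U \<in> sets borel"
    and p: "\<And>k. k \<in> S \<Longrightarrow> prob {\<omega> \<in> space M. X k \<omega> \<in> U} \<le> p" "0 \<le> p"
  shows "integrable M (\<lambda>\<omega>. exp (card {k \<in> S. X k \<omega> \<in> U}))"
    and "(\<integral>\<omega>. exp (card {k \<in> S. X k \<omega> \<in> U}) \<partial>M) \<le> exp ((exp 1 - 1) * card S * p)"
proof -
  have fin: "finite T" if "T \<subseteq> S" for T
    using finite_subset[OF that finite_subset[OF S finite_atLeastAtMost]] .
  define c where "c = exp 1 - (1::real)"
  have "0 \<le> c" using exp_ge_add_one_self[of 1] by (simp add: c_def)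
  define E where "E T = {\<omega> \<in> space M. \<forall>k\<in>T. X k \<omega> \<in> U}" for T
  have E_sets: "E T \<in> events" if "T \<subseteq> S" for T
    unfolding E_def using fin[OF that] U by measurable
  (* Z is the product of the factors 1 + c [X k \<in> U] over k \<in> S, i.e. exp of the count,
     expanded over subsets so that each term is an event whose probability factorises. *)
  define Z where "Z \<omega> = (\<Sum>T\<in>Pow S. c ^ card T * indicator (E T) \<omega>)" for \<omega>
  have Z_eq: "Z \<omega> = exp (card {k \<in> S. X k \<omega> \<in> U})" if "\<omega> \<in> space M" for \<omega>
  proof -
    let ?A = "{k \<in> S. X k \<omega> \<in> U}"
    have "Z \<omega> = (\<Sum>T\<in>Pow ?A. c ^ card T)"
      unfolding Z_def using that fin[of S]
      by (intro sum.mono_neutral_cong_right) (auto simp: E_def indicator_def)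
    also have "\<dots> = exp 1 ^ card ?A"
      using fin[of ?A] by (simp add: sum_Pow_power_card c_def)
    finally show ?thesis by (simp add: exp_of_nat_mult[symmetric])
  qed
  have "integrable M Z"
    unfolding Z_def using E_sets by (auto intro!: integrable_real_indicator simp: less_top[symmetric])
  then show "integrable M (\<lambda>\<omega>. exp (card {k \<in> S. X k \<omega> \<in> U}))"
    by (rule Bochner_Integration.integrable_cong[THEN iffD1, OF refl, rotated]) (simp add: Z_eq)
  have "(\<integral>\<omega>. exp (card {k \<in> S. X k \<omega> \<in> U}) \<partial>M) = expectation Z"
    by (rule Bochner_Integration.integral_cong) (simp_all add: Z_eq)
  also have "\<dots> = (\<Sum>T\<in>Pow S. c ^ card T * prob (E T))"
    unfolding Z_def using E_sets fin[of S]
    by (subst Bochner_Integration.integral_sum)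
      (auto intro!: integrable_real_indicator sum.cong simp: less_top[symmetric] E_def)
  also have "\<dots> \<le> (\<Sum>T\<in>Pow S. c ^ card T * p ^ card T)"
  proof (intro sum_mono mult_left_mono)
    fix T assume "T \<in> Pow S"
    then have "prob (E T) = (\<Prod>k\<in>T. prob {\<omega> \<in> space M. X k \<omega> \<in> U})"
      unfolding E_def using S gap U by (intro prob_Ball_eq_prod) (auto intro: gap)
    also have "\<dots> \<le> (\<Prod>k\<in>T. p)"
      using \<open>T \<in> Pow S\<close> p by (intro prod_mono) auto
    finally show "prob (E T) \<le> p ^ card T" by simp
  qed (use \<open>0 \<le> c\<close> in simp)
  also have "\<dots> = (1 + c * p) ^ card S"
    using fin[of S] by (simp add: sum_Pow_power_card flip: power_mult_distrib)
  also have "\<dots> \<le> exp (c * p) ^ card S"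
    using \<open>0 \<le> c\<close> p(2) by (intro power_mono) (simp_all add: add.commute)
  finally have "(\<integral>\<omega>. exp (card {k \<in> S. X k \<omega> \<in> U}) \<partial>M) \<le> exp (card S * (c * p))"
    by (simp add: exp_of_nat_mult)
  then show "(\<integral>\<omega>. exp (card {k \<in> S. X k \<omega> \<in> U}) \<partial>M) \<le> exp ((exp 1 - 1) * card S * p)"
    by (simp add: c_def mult_ac)
qed

lemma prob_card_ge_le_exp:
  fixes a :: real
  assumes "S \<subseteq> {1..K}" and "\<And>j k. j \<in> S \<Longrightarrow> k \<in> S \<Longrightarrow> j < k \<Longrightarrow> j + m < k"
    and "U \<in> sets borel"
    and "\<And>k. k \<in> S \<Longrightarrow> prob {\<omega> \<in> space M. X k \<omega> \<in> U} \<le> p" "0 \<le> p"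
  shows "prob {\<omega> \<in> space M. a \<le> card {k \<in> S. X k \<omega> \<in> U}} \<le> exp ((exp 1 - 1) * card S * p - a)"
proof -
  have "prob {\<omega> \<in> space M. a \<le> card {k \<in> S. X k \<omega> \<in> U}}
      = prob {\<omega> \<in> space M. exp a \<le> exp (card {k \<in> S. X k \<omega> \<in> U})}"
    by simp
  also have "\<dots> \<le> (\<integral>\<omega>. exp (card {k \<in> S. X k \<omega> \<in> U}) \<partial>M) / exp a"
    using integral_exp_card_le(1)[OF assms] by (intro integral_Markov_inequality_measure) auto
  also have "\<dots> \<le> exp ((exp 1 - 1) * card S * p) / exp a"
    using integral_exp_card_le(2)[OF assms] by (intro divide_right_mono) simp_all
  finally show ?thesis
    by (simp add: exp_diff)
qed

lemma prob_residue_class_card_ge_le: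
  fixes a :: real and r :: nat
  defines "S \<equiv> {k \<in> {1..K}. k mod (m + 1) = r}"
  assumes U: "U \<in> sets borel" and "0 \<le> a"
    and p: "\<And>k. k \<in> {1..K} \<Longrightarrow> prob {\<omega> \<in> space M. X k \<omega> \<in> U} \<le> a / (exp 1 * (K + m + 1))"
  shows "prob {\<omega> \<in> space M. a / (m + 1) \<le> card {k \<in> S. X k \<omega> \<in> U}} \<le> exp (- (a / (exp 1 * (m + 1))))"
proof -
  define d :: nat where "d = m + 1"
  define p where "p = a / (exp 1 * (K + d))"
  have "d > 0" by (simp add: d_def)
  have "card S \<le> (K + d) / d"
    using card_residue_class_le[of K d r] by (simp add: S_def d_def field_simps flip: of_nat_mult)
  then have "card S * p \<le> (K + d) / d * p"
    using \<open>0 \<le> a\<close> by (intro mult_right_mono) (simp_all add: p_def)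
  also have "\<dots> = ((K + d) * a) / ((K + d) * (exp 1 * d))"
    by (simp add: p_def mult_ac)
  also have "\<dots> = a / (exp 1 * d)"
    using \<open>d > 0\<close> by (intro mult_divide_mult_cancel_left) simp
  finally have card_p: "card S * p \<le> a / (exp 1 * d)" .
  have gap: "j + m < k" if "j \<in> S" "k \<in> S" "j < k" for j k
    using mod_eq_less_imp_add_le[of j "m + 1" k] that by (simp add: S_def)
  have "prob {\<omega> \<in> space M. a / d \<le> card {k \<in> S. X k \<omega> \<in> U}} \<le> exp ((exp 1 - 1) * card S * p - a / d)"
    using U \<open>0 \<le> a\<close> p gap by (intro prob_card_ge_le_exp) (auto simp: S_def p_def d_def mult_ac)
  also have "\<dots> \<le> exp ((exp 1 - 1) * (a / (exp 1 * d)) - a / d)"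
    using mult_left_mono[OF card_p, of "exp 1 - 1"] exp_ge_add_one_self[of 1] by (simp add: mult.assoc)
  also have "\<dots> = exp (- (a / (exp 1 * d)))"
    using \<open>d > 0\<close> by (simp add: field_simps)
  finally show ?thesis by (simp add: d_def)
qed

lemma prob_card_ge_le:
  fixes a :: real
  assumes U: "U \<in> sets borel" and "0 \<le> a"
    and "\<And>k. k \<in> {1..K} \<Longrightarrow> prob {\<omega> \<in> space M. X k \<omega> \<in> U} \<le> a / (exp 1 * (K + m + 1))"
  shows "prob {\<omega> \<in> space M. a \<le> card {k \<in> {1..K}. X k \<omega> \<in> U}} \<le> (m + 1) * exp (- (a / (exp 1 * (m + 1))))"
proof -
  define S where "S r = {k \<in> {1..K}. k mod (m + 1) = r}" for r
  define G where "G r = {\<omega> \<in> space M. a / (m + 1) \<le> card {k \<in> S r. X k \<omega> \<in> U}}" for r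
  have G_sets: "G r \<in> events" for r
    unfolding G_def S_def using U by measurable
  have "{\<omega> \<in> space M. a \<le> card {k \<in> {1..K}. X k \<omega> \<in> U}} \<subseteq> (\<Union>r<m + 1. G r)"
  proof safe
    fix \<omega> assume "\<omega> \<in> space M" and a_le: "a \<le> card {k \<in> {1..K}. X k \<omega> \<in> U}"
    obtain r where "r < m + 1" and "card {k \<in> {1..K}. X k \<omega> \<in> U} / (m + 1)
        \<le> card {k \<in> {k \<in> {1..K}. X k \<omega> \<in> U}. k mod (m + 1) = r}"
      using ex_residue_class_card_ge[of "{k \<in> {1..K}. X k \<omega> \<in> U}" "m + 1"] by auto
    moreover have "{k \<in> {k \<in> {1..K}. X k \<omega> \<in> U}. k mod (m + 1) = r} = {k \<in> S r. X k \<omega> \<in> U}"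
      by (auto simp: S_def)
    moreover have "a / (m + 1) \<le> card {k \<in> {1..K}. X k \<omega> \<in> U} / (m + 1)"
      using a_le by (intro divide_right_mono) auto
    ultimately have "a / (m + 1) \<le> card {k \<in> S r. X k \<omega> \<in> U}" by simp
    then show "\<omega> \<in> (\<Union>r<m + 1. G r)"
      using \<open>r < m + 1\<close> \<open>\<omega> \<in> space M\<close> by (auto simp: G_def)
  qed
  then have "prob {\<omega> \<in> space M. a \<le> card {k \<in> {1..K}. X k \<omega> \<in> U}} \<le> prob (\<Union>r<m + 1. G r)"
    using G_sets by (intro finite_measure_mono) auto
  also have "\<dots> \<le> (\<Sum>r<m + 1. prob (G r))"
    using G_sets by (intro measure_UNION_le) auto
  also have "\<dots> \<le> (\<Sum>r<m + 1. exp (- (a / (exp 1 * (m + 1)))))"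
    unfolding G_def S_def using assms by (intro sum_mono prob_residue_class_card_ge_le)
  finally show ?thesis by simp
qed

end

locale m_dependent_sample = m_dependent_family +
  fixes F :: "real \<Rightarrow> real"
  assumes X_cdf: "\<And>k x. k \<in> {1..K} \<Longrightarrow> prob {\<omega> \<in> space M. X k \<omega> \<le> x} = F x"
    and continuous_cdf: "continuous_on UNIV F"
begin

lemma prob_card_gt_tail_quantile_ge:
  assumes "1 \<le> j" "j \<le> K"
  shows "prob {\<omega> \<in> space M. j \<le> card {k \<in> {1..K}. X k \<omega> > tail_quantile F (j / (exp 1 * (K + m + 1)))}}
    \<le> (m + 1) * exp (- (j / (exp 1 * (m + 1))))"
proof -
  define p where "p = j / (exp 1 * (K + m + 1))"
  have "0 < p" "p < 1" unfolding p_def using assms by (rule tail_fraction_bounds)+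
  have "prob {\<omega> \<in> space M. X k \<omega> \<in> {tail_quantile F p<..}} \<le> p" if "k \<in> {1..K}" for k
    using prob_tail_quantile(1)[OF X_measurable X_cdf[OF that] continuous_cdf \<open>0 < p\<close> \<open>p < 1\<close>]
    by simp
  then have "prob {\<omega> \<in> space M. real j \<le> card {k \<in> {1..K}. X k \<omega> \<in> {tail_quantile F p<..}}}
      \<le> (m + 1) * exp (- (j / (exp 1 * (m + 1))))"
    by (intro prob_card_ge_le) (simp_all add: p_def)
  then show ?thesis by (simp add: p_def)
qed

lemma prob_ord_stat_gt_tail_quantile:
  assumes "1 \<le> j" "j \<le> K"
  shows "prob {\<omega> \<in> space M. ord_stat (\<lambda>k. X k \<omega>) K (K - j + 1) > tail_quantile F (j / (exp 1 * (K + m + 1)))}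
    \<le> (m + 1) * exp (- (j / (exp 1 * (m + 1))))"
  using assms ord_stat_gt_imp_card_ge[OF assms(2)]
  by (intro order.trans[OF _ prob_card_gt_tail_quantile_ge] finite_measure_mono) auto

lemma prob_all_below_tail_quantile:
  assumes "R \<subseteq> {1..K}" and "\<And>j k. j \<in> R \<Longrightarrow> k \<in> R \<Longrightarrow> j < k \<Longrightarrow> j + m < k"
    and p: "0 < p" "p < 1"
  shows "prob {\<omega> \<in> space M. \<forall>k\<in>R. X k \<omega> < tail_quantile F p} \<le> (1 - p) ^ card R"
proof -
  have "prob {\<omega> \<in> space M. \<forall>k\<in>R. X k \<omega> \<in> {..<tail_quantile F p}}
      = (\<Prod>k\<in>R. prob {\<omega> \<in> space M. X k \<omega> \<in> {..<tail_quantile F p}})"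
    using assms(1,2) by (intro prob_Ball_eq_prod) auto
  also have "\<dots> \<le> (\<Prod>k\<in>R. 1 - p)"
    using assms(1) prob_tail_quantile(2)[OF X_measurable X_cdf continuous_cdf p]
    by (intro prod_mono) auto
  finally show ?thesis by simp
qed

lemma prob_top_disjoint:
  assumes "1 \<le> j" "j \<le> K" and E: "E \<subseteq> {1..K}"
  defines "p \<equiv> j / (exp 1 * (K + m + 1))"
  shows "prob {\<omega> \<in> space M. {k \<in> {1..K}. X k \<omega> \<ge> ord_stat (\<lambda>k. X k \<omega>) K (K - j + 1)} \<inter> E = {}}
    \<le> (m + 1) * exp (- (j / (exp 1 * (m + 1)))) + (1 - p) powr (card E / (m + 1))"
proof -
  define q where "q = tail_quantile F p"
  have "0 < p" "p < 1" unfolding p_def using assms(1,2) by (rule tail_fraction_bounds)+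
  have "finite E" using E finite_subset by blast
  then obtain r where "card E / (m + 1) \<le> card {k \<in> E. k mod (m + 1) = r}"
    using ex_residue_class_card_ge[of E "m + 1"] by auto
  define R where "R = {k \<in> E. k mod (m + 1) = r}"
  define G where "G = {\<omega> \<in> space M. j \<le> card {k \<in> {1..K}. X k \<omega> > q}}"
  define H where "H = {\<omega> \<in> space M. \<forall>k\<in>R. X k \<omega> < q}"
  have "finite R" using \<open>finite E\<close> by (simp add: R_def)
  then have events: "G \<in> events" "H \<in> events"
    unfolding G_def H_def by measurable
  have gap: "k + m < k'" if "k \<in> R" "k' \<in> R" "k < k'" for k k'
    using mod_eq_less_imp_add_le[of k "m + 1" k'] that by (simp add: R_def)
  have "prob H \<le> (1 - p) ^ card R"
    unfolding H_def q_def using E gap \<open>0 < p\<close> \<open>p < 1\<close>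
    by (intro prob_all_below_tail_quantile) (auto simp: R_def)
  also have "\<dots> = (1 - p) powr card R"
    using \<open>p < 1\<close> by (simp add: powr_realpow)
  also have "\<dots> \<le> (1 - p) powr (card E / (m + 1))"
    using \<open>card E / (m + 1) \<le> _\<close> \<open>0 < p\<close> \<open>p < 1\<close> by (intro powr_mono') (simp_all add: R_def)
  finally have "prob H \<le> (1 - p) powr (card E / (m + 1))" .
  moreover have "prob G \<le> (m + 1) * exp (- (j / (exp 1 * (m + 1))))"
    unfolding G_def q_def p_def using assms(1,2) by (rule prob_card_gt_tail_quantile_ge)
  moreover have "{\<omega> \<in> space M. {k \<in> {1..K}. X k \<omega> \<ge> ord_stat (\<lambda>k. X k \<omega>) K (K - j + 1)} \<inter> E = {}}
      \<subseteq> G \<union> H"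
  proof safe
    fix \<omega> assume "\<omega> \<in> space M" "\<omega> \<notin> H"
      and disj: "{k \<in> {1..K}. X k \<omega> \<ge> ord_stat (\<lambda>k. X k \<omega>) K (K - j + 1)} \<inter> E = {}"
    then obtain k where "k \<in> R" "q \<le> X k \<omega>" by (auto simp: H_def not_less)
    have "k \<in> E" "k \<in> {1..K}" using \<open>k \<in> R\<close> E by (auto simp: R_def)
    then have "X k \<omega> < ord_stat (\<lambda>k. X k \<omega>) K (K - j + 1)"
      using disj by (auto simp: not_le[symmetric])
    with \<open>q \<le> X k \<omega>\<close> have "ord_stat (\<lambda>k. X k \<omega>) K (K - j + 1) > q" by linarith
    then show "\<omega> \<in> G"
      using ord_stat_gt_imp_card_ge[OF assms(2)] \<open>\<omega> \<in> space M\<close> by (simp add: G_def)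
  qed
  then have "prob {\<omega> \<in> space M. {k \<in> {1..K}. X k \<omega> \<ge> ord_stat (\<lambda>k. X k \<omega>) K (K - j + 1)} \<inter> E = {}}
      \<le> prob G + prob H"
    using events by (intro order.trans[OF finite_measure_mono measure_Un_le]) auto
  ultimately show ?thesis by linarith
qed

theorem top_selection_bounds:
  assumes j: "1 \<le> j" "j \<le> K" and "0 < \<epsilon>"
    and "real (m + 1) * (exp 1 + \<epsilon>) * ln (real K) \<le> j"
  shows "prob {\<omega> \<in> space M.
        ord_stat (\<lambda>k. X k \<omega>) K (K - j + 1) > tail_quantile F (real j / (exp 1 * real (K + m + 1)))}
       \<le> real (m + 1) / real K powr (1 + \<epsilon> / 3)
   \<and> (\<forall>E \<subseteq> {1..K}.
       prob {\<omega> \<in> space M. {k \<in> {1..K}. X k \<omega> \<ge> ord_stat (\<lambda>k. X k \<omega>) K (K - j + 1)} \<inter> E = {}}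
       \<le> real (m + 1) * exp (- (real j / (exp 1 * real (m + 1)))
                 * ((1 - real (m + 1) / real K) / (1 + real (m + 1) / real K)))
         + (1 - real j / (exp 1 * real (K + m + 1))) powr (real (card E) / real (m + 1)))"
proof (intro conjI allI impI)
  have exp_bound: "exp (- (j / (exp 1 * (m + 1)))) \<le> 1 / real K powr (1 + \<epsilon> / 3)"
    using assms by (intro exp_neg_le_inverse_powr) simp_all
  show "prob {\<omega> \<in> space M.
        ord_stat (\<lambda>k. X k \<omega>) K (K - j + 1) > tail_quantile F (real j / (exp 1 * real (K + m + 1)))}
       \<le> real (m + 1) / real K powr (1 + \<epsilon> / 3)"
    using prob_ord_stat_gt_tail_quantile[OF j] mult_left_mono[OF exp_bound, of "m + 1"] by simp
  fix E assume "E \<subseteq> {1..K}"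
  have "(1 - real (m + 1) / K) / (1 + real (m + 1) / K) \<le> 1"
    by (simp add: divide_le_eq add_pos_nonneg)
  from mult_left_le[OF this, of "j / (exp 1 * (m + 1))"]
  have exp_weaken: "exp (- (j / (exp 1 * (m + 1))))
      \<le> exp (- (j / (exp 1 * (m + 1))) * ((1 - real (m + 1) / K) / (1 + real (m + 1) / K)))"
    by simp
  show "prob {\<omega> \<in> space M. {k \<in> {1..K}. X k \<omega> \<ge> ord_stat (\<lambda>k. X k \<omega>) K (K - j + 1)} \<inter> E = {}}
       \<le> real (m + 1) * exp (- (real j / (exp 1 * real (m + 1)))
                 * ((1 - real (m + 1) / real K) / (1 + real (m + 1) / real K)))
         + (1 - real j / (exp 1 * real (K + m + 1))) powr (real (card E) / real (m + 1))"
    by (rule order.trans[OF prob_top_disjoint[OF j \<open>E \<subseteq> {1..K}\<close>]])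
      (intro add_right_mono mult_left_mono exp_weaken; simp)
qed

end

theorem mainTheorem14:
  fixes M :: "'a measure"
    and X :: "nat \<Rightarrow> nat \<Rightarrow> 'a \<Rightarrow> real"
    and F :: "real \<Rightarrow> real"
    and m :: nat
    and MK :: "nat \<Rightarrow> nat"
    and \<epsilon> :: real
  assumes "prob_space M"
    and meas: "\<And>K k. X K k \<in> borel_measurable M"
    and ident: "\<And>K k x. 1 \<le> k \<Longrightarrow> k \<le> K \<Longrightarrow>
                  measure M {\<omega> \<in> space M. X K k \<omega> \<le> x} = F x"
    and cont: "continuous_on UNIV F"
    and mdep: "\<And>K. prob_space.m_dependent M m K (X K)"
    and MK_pos: "\<And>K. MK K > 0"
    and MK_lim: "(\<lambda>K. real (MK K) / real K) \<longlonglongrightarrow> 0"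
    and eps: "\<epsilon> > 0"
    and MK_ge: "\<And>K. real (MK K) \<ge> real (m + 1) * (exp 1 + \<epsilon>) * ln (real K)"
  shows "\<exists>K0. \<forall>K > K0.
     measure M {\<omega> \<in> space M.
        ord_stat (\<lambda>k. X K k \<omega>) K (K - MK K + 1)
          > tail_quantile F (real (MK K) / (exp 1 * real (K + m + 1)))}
       \<le> real (m + 1) / real K powr (1 + \<epsilon> / 3)
   \<and> (\<forall>E \<subseteq> {1..K}.
       measure M {\<omega> \<in> space M.
          {k \<in> {1..K}. X K k \<omega> \<ge> ord_stat (\<lambda>k. X K k \<omega>) K (K - MK K + 1)} \<inter> E = {}}
       \<le> real (m + 1) * exp (- (real (MK K) / (exp 1 * real (m + 1)))
                 * ((1 - real (m + 1) / real K) / (1 + real (m + 1) / real K)))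
         + (1 - real (MK K) / (exp 1 * real (K + m + 1))) powr (real (card E) / real (m + 1)))"
proof -
  have sample: "m_dependent_sample M m K (X K) F" for K
  proof (rule m_dependent_sample.intro)
    show "m_dependent_family M m K (X K)"
      by (intro m_dependent_family.intro m_dependent_family_axioms.intro assms(1) meas mdep)
    show "m_dependent_sample_axioms M K (X K) F"
      by (intro m_dependent_sample_axioms.intro cont ident) auto
  qed
  have "eventually (\<lambda>K. MK K / K < 1) sequentially"
    using MK_lim by (intro order_tendstoD) auto
  then obtain N where N: "\<And>K. N \<le> K \<Longrightarrow> MK K / K < 1"
    unfolding eventually_sequentially by blast
  have "1 \<le> MK K" "MK K \<le> K" if "N < K" for K
    using MK_pos[of K] N[of K] that by (simp_all add: Suc_le_eq divide_less_eq)
  then show ?thesis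
    by (intro exI[of _ N] allI impI m_dependent_sample.top_selection_bounds[OF sample] eps MK_ge) auto
qed

end
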